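(* Let $S\subseteq\mathbb{N}^k$. If $S$ is denoted by some resimple expression, then $S$ is a recognizable subset of $\mathbb{N}^k$.
   Context: $\mathbb{N}$ includes $0$; $\mathbf{e}_j$ is the $j$-th unit vector of $\mathbb{N}^k$. For finite $B\subseteq\mathbb{N}^k$, $B^\oplus$ is the set of $\mathbb{N}$-linear combinations of elements of $B$, and $\gamma+B^\oplus=\{\gamma+\sigma:\sigma\in B^\oplus\}$. $B$ is a free basis if every element of $B^\oplus$ has a unique representation as an $\mathbb{N}$-linear combination of elements of $B$. An element is primary if it equals $n\mathbf{e}_j$ with $n>0$. An atomic resimple expression is $\gamma+B^\oplus$ with $\gamma\in\mathbb{N}^k$ and $B$ a free basis all of whose elements are primary. Resimple expressions are built inductively: atomic resimple expressions are resimple, and if $E,F$ are resimple then so are $E\cup F$, $E\cap F$ and $E^c$ (complement in $\mathbb{N}^k$), with the obvious set semantics. With $A=\{a_1,\dots,a_k\}$ and $\varphi:A^*\to\mathbb{N}^k$, $\varphi(w)=(|w|_{a_1},\dots,|w|_{a_k})$ ($|w|_a$ = number of occurrences of $a$ in $w$), a set $S\subseteq\mathbb{N}^k$ is recognizable if $\varphi^{-1}(S)$ is a regular language. *)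

theory Defs
  imports Main
begin

(* Vectors of N^k are represented as functions nat => nat vanishing from index k on. *)
definition Nk :: "nat \<Rightarrow> (nat \<Rightarrow> nat) set" where
  "Nk k = {v. \<forall>j\<ge>k. v j = 0}"

definition unitvec :: "nat \<Rightarrow> nat \<Rightarrow> nat" where
  "unitvec j = (\<lambda>i. if i = j then 1 else 0)"

definition lincomb :: "((nat \<Rightarrow> nat) \<Rightarrow> nat) \<Rightarrow> (nat \<Rightarrow> nat) set \<Rightarrow> nat \<Rightarrow> nat" where
  "lincomb c B = (\<lambda>i. \<Sum>b\<in>B. c b * b i)"

definition span_N :: "(nat \<Rightarrow> nat) set \<Rightarrow> (nat \<Rightarrow> nat) set" where
  "span_N B = {lincomb c B | c. True}"

definition free_basis :: "(nat \<Rightarrow> nat) set \<Rightarrow> bool" where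
  "free_basis B \<longleftrightarrow> finite B \<and>
     (\<forall>c c'. lincomb c B = lincomb c' B \<longrightarrow> (\<forall>b\<in>B. c b = c' b))"

definition primary :: "nat \<Rightarrow> (nat \<Rightarrow> nat) \<Rightarrow> bool" where
  "primary k v \<longleftrightarrow> (\<exists>n j. n > 0 \<and> j < k \<and> v = (\<lambda>i. n * unitvec j i))"

datatype rexpr = Atom "nat \<Rightarrow> nat" "(nat \<Rightarrow> nat) set"
  | RUn rexpr rexpr | RInt rexpr rexpr | RCompl rexpr

fun resimple :: "nat \<Rightarrow> rexpr \<Rightarrow> bool" where
  "resimple k (Atom \<gamma> B) \<longleftrightarrow> \<gamma> \<in> Nk k \<and> free_basis B \<and> (\<forall>b\<in>B. primary k b)"
| "resimple k (RUn E F) \<longleftrightarrow> resimple k E \<and> resimple k F"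
| "resimple k (RInt E F) \<longleftrightarrow> resimple k E \<and> resimple k F"
| "resimple k (RCompl E) \<longleftrightarrow> resimple k E"

fun rsem :: "nat \<Rightarrow> rexpr \<Rightarrow> (nat \<Rightarrow> nat) set" where
  "rsem k (Atom \<gamma> B) = {(\<lambda>i. \<gamma> i + \<sigma> i) | \<sigma>. \<sigma> \<in> span_N B}"
| "rsem k (RUn E F) = rsem k E \<union> rsem k F"
| "rsem k (RInt E F) = rsem k E \<inter> rsem k F"
| "rsem k (RCompl E) = Nk k - rsem k E"

(* Regular languages over the alphabet {0..<k} (letter i stands for a_(i+1)) *)
definition conc :: "'a list set \<Rightarrow> 'a list set \<Rightarrow> 'a list set" where
  "conc L M = {u @ v | u v. u \<in> L \<and> v \<in> M}"

inductive_set star_lang :: "'a list set \<Rightarrow> 'a list set" for L where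
  star_nil: "[] \<in> star_lang L"
| star_app: "u \<in> L \<Longrightarrow> v \<in> star_lang L \<Longrightarrow> u @ v \<in> star_lang L"

inductive regular :: "nat \<Rightarrow> nat list set \<Rightarrow> bool" for k where
  reg_empty: "regular k {}"
| reg_eps: "regular k {[]}"
| reg_letter: "a < k \<Longrightarrow> regular k {[a]}"
| reg_union: "regular k L \<Longrightarrow> regular k M \<Longrightarrow> regular k (L \<union> M)"
| reg_conc: "regular k L \<Longrightarrow> regular k M \<Longrightarrow> regular k (conc L M)"
| reg_star: "regular k L \<Longrightarrow> regular k (star_lang L)"

definition parikh :: "nat \<Rightarrow> nat list \<Rightarrow> nat \<Rightarrow> nat" where
  "parikh k w = (\<lambda>i. if i < k then count_list w i else 0)"

definition recognizable :: "nat \<Rightarrow> (nat \<Rightarrow> nat) set \<Rightarrow> bool" where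
  "recognizable k S \<longleftrightarrow> regular k {w \<in> lists {..<k}. parikh k w \<in> S}"

end

theory Submission
  imports Defs
begin

(* Fix a threshold T and a period P > 0 and identify two counts if they are equal and below T,
   or both at least T and congruent modulo P.  A resimple set is saturated for the coordinatewise
   extension of this congruence, for suitable T and P: in coordinate j an atom gamma + B^oplus
   with primary free basis B is the progression gamma_j + n_j N, where n_j e_j is the unique
   element of B in direction j (n_j = 0 if there is none), which is saturated once T > gamma_j
   and n_j divides P; unions, intersections and complements stay saturated after passing to a
   common refinement (max T, product of the P).  A saturated set is then recognized by the finite
   automaton storing the class of every letter count, and the language of a finite automaton is
   regular by the McNaughton-Yamada construction. *)

lemma regular_UN:
  assumes "finite I" "\<And>i. i \<in> I \<Longrightarrow> regular k (L i)"
  shows "regular k (\<Union>i\<in>I. L i)"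
  using assms by (induction I rule: finite_induct) (auto intro: regular.intros)

lemma regular_singleton: "w \<in> lists {..<k} \<Longrightarrow> regular k {w}"
proof (induction w)
  case Nil
  show ?case by (rule reg_eps)
next
  case (Cons a w)
  have "{a # w} = conc {[a]} {w}" by (simp add: conc_def)
  with Cons show ?case by (auto intro: reg_conc reg_letter)
qed

lemma regular_finite: "finite L \<Longrightarrow> L \<subseteq> lists {..<k} \<Longrightarrow> regular k L"
  using regular_UN[of L k "\<lambda>w. {w}"] regular_singleton by (auto simp: subset_iff)

(* The languages R^X_pq of the McNaughton-Yamada construction: the states reached after the
   nonempty proper prefixes of w must lie in X. *)
fun path_via :: "('s \<Rightarrow> 'a \<Rightarrow> 's) \<Rightarrow> 's set \<Rightarrow> 's \<Rightarrow> 'a list \<Rightarrow> 's \<Rightarrow> bool" where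
  "path_via d X p [] q \<longleftrightarrow> p = q"
| "path_via d X p [a] q \<longleftrightarrow> d p a = q"
| "path_via d X p (a # w) q \<longleftrightarrow> d p a \<in> X \<and> path_via d X (d p a) w q"

definition path_lang :: "nat \<Rightarrow> ('s \<Rightarrow> nat \<Rightarrow> 's) \<Rightarrow> 's set \<Rightarrow> 's \<Rightarrow> 's \<Rightarrow> nat list set" where
  "path_lang k d X p q = {w \<in> lists {..<k}. path_via d X p w q}"

lemma path_via_mono: "path_via d X p w q \<Longrightarrow> X \<subseteq> Y \<Longrightarrow> path_via d Y p w q"
  by (induction d X p w q rule: path_via.induct) auto

lemma path_via_append:
  "path_via d X p u r \<Longrightarrow> path_via d X r v q \<Longrightarrow> r \<in> X \<Longrightarrow> path_via d X p (u @ v) q"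
proof (induction d X p u r rule: path_via.induct)
  case (2 d X p a q)
  then show ?case by (cases v) auto
qed auto

lemma path_via_Cons_nonempty:
  "u \<noteq> [] \<Longrightarrow> path_via d X p (a # u) q \<longleftrightarrow> d p a \<in> X \<and> path_via d X (d p a) u q"
  by (cases u) auto

lemma path_via_insert_split:
  "path_via d (insert r X) p w q \<Longrightarrow> path_via d X p w q \<or>
     (\<exists>u v. w = u @ v \<and> u \<noteq> [] \<and> path_via d X p u r \<and> path_via d (insert r X) r v q)"
proof (induction w arbitrary: p)
  case (Cons a w)
  show ?case
  proof (cases "w = [] \<or> d p a = r")
    case True
    then show ?thesis
    proof
      assume "w = []"
      then show ?thesis using Cons.prems by simp
    next
      assume "d p a = r"
      then have "path_via d X p [a] r" by simp
      moreover have "path_via d (insert r X) r w q"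
        using Cons.prems \<open>d p a = r\<close> by (cases w) auto
      ultimately show ?thesis by (intro disjI2 exI[of _ "[a]"] exI[of _ w]) simp
    qed
  next
    case False
    then have "d p a \<in> X" "path_via d (insert r X) (d p a) w q"
      using Cons.prems by (auto simp: path_via_Cons_nonempty)
    with Cons.IH consider "path_via d X (d p a) w q"
      | u v where "w = u @ v" "u \<noteq> []" "path_via d X (d p a) u r" "path_via d (insert r X) r v q"
      by blast
    then show ?thesis
    proof cases
      case 1
      then show ?thesis using False \<open>d p a \<in> X\<close> by (simp add: path_via_Cons_nonempty)
    next
      case (2 u v)
      then show ?thesis using \<open>d p a \<in> X\<close>
        by (intro disjI2 exI[of _ "a # u"] exI[of _ v]) (simp add: path_via_Cons_nonempty)
    qed
  qed
qed simp

lemma path_lang_insert_loop: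
  assumes "w \<in> path_lang k d (insert r X) r q"
  shows "w \<in> conc (star_lang (path_lang k d X r r)) (path_lang k d X r q)"
  using assms
proof (induction "length w" arbitrary: w rule: less_induct)
  case less
  from less.prems have w: "w \<in> lists {..<k}" "path_via d (insert r X) r w q"
    by (auto simp: path_lang_def)
  from path_via_insert_split[OF w(2)] show ?case
  proof (elim disjE exE conjE)
    assume "path_via d X r w q"
    then have "w \<in> path_lang k d X r q" using w(1) by (simp add: path_lang_def)
    then show ?thesis using star_nil unfolding conc_def by fastforce
  next
    fix u v assume uv: "w = u @ v" "u \<noteq> []" "path_via d X r u r" "path_via d (insert r X) r v q"
    then have "v \<in> conc (star_lang (path_lang k d X r r)) (path_lang k d X r q)"
      using less.hyps w(1) by (simp add: path_lang_def)
    then obtain s t where "v = s @ t" "s \<in> star_lang (path_lang k d X r r)" "t \<in> path_lang k d X r q"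
      by (auto simp: conc_def)
    moreover have "u \<in> path_lang k d X r r" using uv w(1) by (simp add: path_lang_def)
    ultimately have "u @ s \<in> star_lang (path_lang k d X r r)" "w = (u @ s) @ t"
      "t \<in> path_lang k d X r q" using uv(1) by (auto intro: star_app)
    then show ?thesis unfolding conc_def by blast
  qed
qed

lemma path_lang_mono: "X \<subseteq> Y \<Longrightarrow> path_lang k d X p q \<subseteq> path_lang k d Y p q"
  by (auto simp: path_lang_def intro: path_via_mono)

lemma path_lang_append:
  "u \<in> path_lang k d X p r \<Longrightarrow> v \<in> path_lang k d X r q \<Longrightarrow> r \<in> X \<Longrightarrow> u @ v \<in> path_lang k d X p q"
  by (auto simp: path_lang_def intro: path_via_append)

lemma star_lang_path_lang_insert:
  "v \<in> star_lang (path_lang k d X r r) \<Longrightarrow> v \<in> path_lang k d (insert r X) r r"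
proof (induction v rule: star_lang.induct)
  case star_nil
  then show ?case by (simp add: path_lang_def)
next
  case (star_app u v)
  have "u \<in> path_lang k d (insert r X) r r"
    using star_app.hyps(1) path_lang_mono[of X "insert r X"] by blast
  from this star_app.IH show ?case by (rule path_lang_append) simp
qed

lemma path_lang_insert:
  "path_lang k d (insert r X) p q = path_lang k d X p q \<union>
     conc (path_lang k d X p r) (conc (star_lang (path_lang k d X r r)) (path_lang k d X r q))"
  (is "?L = ?R")
proof (intro equalityI subsetI)
  fix w assume "w \<in> ?L"
  then have w: "w \<in> lists {..<k}" "path_via d (insert r X) p w q"
    by (auto simp: path_lang_def)
  from path_via_insert_split[OF w(2)] show "w \<in> ?R"
  proof (elim disjE exE conjE)
    assume "path_via d X p w q"
    then show ?thesis using w(1) by (simp add: path_lang_def)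
  next
    fix u v assume uv: "w = u @ v" "u \<noteq> []" "path_via d X p u r" "path_via d (insert r X) r v q"
    then have "u \<in> path_lang k d X p r" using w(1) by (simp add: path_lang_def)
    moreover have "v \<in> conc (star_lang (path_lang k d X r r)) (path_lang k d X r q)"
      using uv w(1) by (intro path_lang_insert_loop) (simp add: path_lang_def)
    ultimately show ?thesis using uv(1) unfolding conc_def by blast
  qed
next
  have mono: "path_lang k d X s t \<subseteq> path_lang k d (insert r X) s t" for s t
    by (rule path_lang_mono) blast
  have app: "u @ v \<in> path_lang k d (insert r X) s t"
    if "u \<in> path_lang k d (insert r X) s r" "v \<in> path_lang k d (insert r X) r t" for u v s t
    using that by (rule path_lang_append) simp
  fix w assume "w \<in> ?R"
  then consider "w \<in> path_lang k d X p q"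
    | u s t where "w = u @ s @ t" "u \<in> path_lang k d X p r"
        "s \<in> star_lang (path_lang k d X r r)" "t \<in> path_lang k d X r q"
    unfolding conc_def by blast
  then show "w \<in> ?L"
  proof cases
    case 1
    then show ?thesis using mono by blast
  next
    case (2 u s t)
    have "u \<in> path_lang k d (insert r X) p r" using 2(2) mono by blast
    moreover have "s \<in> path_lang k d (insert r X) r r"
      using 2(3) by (rule star_lang_path_lang_insert)
    moreover have "t \<in> path_lang k d (insert r X) r q" using 2(4) mono by blast
    ultimately show ?thesis unfolding 2(1) by (intro app)
  qed
qed

lemma path_via_empty_length: "path_via d {} p w q \<Longrightarrow> length w \<le> 1"
  by (induction d "{} :: 'a set" p w q rule: path_via.induct) auto

lemma regular_path_lang: "finite X \<Longrightarrow> regular k (path_lang k d X p q)"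
proof (induction X arbitrary: p q rule: finite_induct)
  case empty
  have "path_lang k d {} p q \<subseteq> {w. set w \<subseteq> {..<k} \<and> length w \<le> 1}"
    by (auto simp: path_lang_def dest: path_via_empty_length)
  then have "finite (path_lang k d {} p q)"
    using finite_lists_length_le[of "{..<k}" 1] finite_subset by blast
  then show ?case by (rule regular_finite) (auto simp: path_lang_def)
next
  case (insert r X)
  then show ?case by (simp add: path_lang_insert reg_union reg_conc reg_star)
qed

lemma foldl_in_closed:
  assumes "p \<in> Q" "\<And>q a. q \<in> Q \<Longrightarrow> a < k \<Longrightarrow> d q a \<in> Q" "w \<in> lists {..<k}"
  shows "foldl d p w \<in> Q"
  using assms(1,3) by (induction w arbitrary: p) (auto intro: assms(2))

lemma path_via_closed_iff:
  assumes "p \<in> Q" "\<And>q a. q \<in> Q \<Longrightarrow> a < k \<Longrightarrow> d q a \<in> Q" "w \<in> lists {..<k}"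
  shows "path_via d Q p w q \<longleftrightarrow> foldl d p w = q"
  using assms(1,3)
proof (induction w arbitrary: p)
  case (Cons a w)
  then show ?case by (cases "w = []") (auto simp: path_via_Cons_nonempty intro: assms(2))
qed simp

lemma regular_dfa_lang:
  assumes "finite Q" "p \<in> Q" "\<And>q a. q \<in> Q \<Longrightarrow> a < k \<Longrightarrow> d q a \<in> Q"
  shows "regular k {w \<in> lists {..<k}. foldl d p w \<in> F}"
proof -
  have "foldl d p w \<in> F \<longleftrightarrow> (\<exists>q\<in>F \<inter> Q. path_via d Q p w q)" if "w \<in> lists {..<k}" for w
    using foldl_in_closed[of p Q k d w] path_via_closed_iff[of p Q k d w] assms(2,3) that by auto
  then have "{w \<in> lists {..<k}. foldl d p w \<in> F} = (\<Union>q\<in>F \<inter> Q. path_lang k d Q p q)"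
    unfolding path_lang_def by blast
  then show ?thesis
    using assms(1) by (simp add: regular_UN regular_path_lang)
qed

definition tp_rep :: "nat \<Rightarrow> nat \<Rightarrow> nat \<Rightarrow> nat" where
  "tp_rep T P x = (if x < T then x else T + (x - T) mod P)"

definition tp_saturated :: "nat \<Rightarrow> nat \<Rightarrow> nat \<Rightarrow> (nat \<Rightarrow> nat) set \<Rightarrow> bool" where
  "tp_saturated k T P S \<longleftrightarrow> (\<forall>v\<in>Nk k. \<forall>w\<in>Nk k.
     (\<forall>i. tp_rep T P (v i) = tp_rep T P (w i)) \<longrightarrow> v \<in> S \<longrightarrow> w \<in> S)"

lemma tp_rep_0 [simp]: "tp_rep T P 0 = 0"
  by (simp add: tp_rep_def)

lemma tp_rep_less: "0 < P \<Longrightarrow> tp_rep T P x < T + P"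
  by (simp add: tp_rep_def)

lemma tp_rep_Suc: "tp_rep T P (Suc (tp_rep T P x)) = tp_rep T P (Suc x)"
proof (cases "x < T")
  case False
  then have "Suc x - T = Suc (x - T)" by simp
  with False show ?thesis by (simp add: tp_rep_def mod_Suc_eq)
qed (simp add: tp_rep_def)

lemma tp_rep_eq_geD:
  assumes "tp_rep T P x = tp_rep T P y" "T \<le> x"
  shows "T \<le> y" "(x - T) mod P = (y - T) mod P"
  using assms by (auto simp: tp_rep_def split: if_splits)

lemma tp_rep_eq_less: "tp_rep T P x = tp_rep T P y \<Longrightarrow> x < T \<Longrightarrow> y = x"
  by (auto simp: tp_rep_def split: if_splits)

lemma tp_rep_eq_refine:
  assumes "T' \<le> T" "P' dvd P" "tp_rep T P x = tp_rep T P y"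
  shows "tp_rep T' P' x = tp_rep T' P' y"
proof (cases "x < T")
  case True
  with assms(3) have "y = x" by (rule tp_rep_eq_less)
  then show ?thesis by simp
next
  case False
  then have xT: "T \<le> x" by simp
  note ge = tp_rep_eq_geD[OF assms(3) xT]
  have "(x - T) mod P' = (y - T) mod P'"
    using ge(2) mod_mod_cancel[OF assms(2)] by metis
  then have "(x - T + (T - T')) mod P' = (y - T + (T - T')) mod P'" by (rule mod_add_cong) simp
  moreover have "x - T + (T - T') = x - T'" "y - T + (T - T') = y - T'"
    using xT ge(1) assms(1) by auto
  ultimately show ?thesis using xT ge(1) assms(1) by (simp add: tp_rep_def)
qed

lemma progression_iff_tp_rep: "g \<le> x \<and> N dvd x - g \<longleftrightarrow> tp_rep g N x = g"
  by (cases "N = 0") (auto simp: tp_rep_def dvd_eq_mod_eq_0)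

lemma tp_rep_eq_progression:
  assumes "g < T" "N = 0 \<or> N dvd P" "tp_rep T P x = tp_rep T P y" "g \<le> x \<and> N dvd x - g"
  shows "g \<le> y \<and> N dvd y - g"
proof (cases "N = 0")
  case True
  with assms(1,4) have "x < T" by simp
  with assms(3) have "y = x" by (rule tp_rep_eq_less)
  with assms(4) show ?thesis by simp
next
  case False
  with assms(1,2) have "tp_rep g N x = tp_rep g N y"
    using tp_rep_eq_refine[OF _ _ assms(3)] by simp
  with assms(4) show ?thesis by (simp add: progression_iff_tp_rep)
qed

lemma tp_saturated_refine:
  "tp_saturated k T' P' S \<Longrightarrow> T' \<le> T \<Longrightarrow> P' dvd P \<Longrightarrow> tp_saturated k T P S"
  unfolding tp_saturated_def by (meson tp_rep_eq_refine)

lemma tp_saturated_Un: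
  assumes "tp_saturated k T1 P1 S" "tp_saturated k T2 P2 S'"
  shows "tp_saturated k (max T1 T2) (P1 * P2) (S \<union> S')"
proof -
  have "tp_saturated k (max T1 T2) (P1 * P2) S" "tp_saturated k (max T1 T2) (P1 * P2) S'"
    using tp_saturated_refine[OF assms(1)] tp_saturated_refine[OF assms(2)] by simp_all
  then show ?thesis unfolding tp_saturated_def by blast
qed

lemma tp_saturated_Int:
  assumes "tp_saturated k T1 P1 S" "tp_saturated k T2 P2 S'"
  shows "tp_saturated k (max T1 T2) (P1 * P2) (S \<inter> S')"
proof -
  have "tp_saturated k (max T1 T2) (P1 * P2) S" "tp_saturated k (max T1 T2) (P1 * P2) S'"
    using tp_saturated_refine[OF assms(1)] tp_saturated_refine[OF assms(2)] by simp_all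
  then show ?thesis unfolding tp_saturated_def by blast
qed

lemma tp_saturated_Diff: "tp_saturated k T P S \<Longrightarrow> tp_saturated k T P (Nk k - S)"
  unfolding tp_saturated_def by (metis Diff_iff)

lemma tp_saturated_coordinatewise:
  assumes "\<And>j x y. tp_rep T P x = tp_rep T P y \<Longrightarrow> x \<in> A j \<Longrightarrow> y \<in> A j"
  shows "tp_saturated k T P {v. \<forall>j. v j \<in> A j}"
  using assms unfolding tp_saturated_def by blast

lemma primary_support: "primary k b \<Longrightarrow> b j \<noteq> 0 \<Longrightarrow> j < k \<and> (\<forall>i. i \<noteq> j \<longrightarrow> b i = 0)"
  unfolding primary_def unitvec_def by (auto split: if_splits)

lemma lincomb_single:
  assumes "finite B" "b \<in> B"
  shows "lincomb (\<lambda>x. if x = b then m else 0) B = (\<lambda>i. m * b i)"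
proof
  fix i
  have "lincomb (\<lambda>x. if x = b then m else 0) B i = (\<Sum>x\<in>B. if x = b then m * b i else 0)"
    unfolding lincomb_def by (rule sum.cong) auto
  also have "\<dots> = m * b i" using assms by simp
  finally show "lincomb (\<lambda>x. if x = b then m else 0) B i = m * b i" .
qed

lemma free_primary_basis_unique:
  assumes fb: "free_basis B" and pr: "\<forall>b\<in>B. primary k b"
    and b: "b \<in> B" "b' \<in> B" "b j \<noteq> 0" "b' j \<noteq> 0"
  shows "b = b'"
proof -
  obtain n j1 where n: "n > 0" "b = (\<lambda>i. n * unitvec j1 i)" using pr b(1) unfolding primary_def by blast
  obtain m j2 where m: "m > 0" "b' = (\<lambda>i. m * unitvec j2 i)" using pr b(2) unfolding primary_def by blast
  have "j1 = j" "j2 = j" using n m b(3,4) unfolding unitvec_def by (auto split: if_splits)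
  then have "(\<lambda>i. m * b i) = (\<lambda>i. n * b' i)" using n m by auto
  then have "lincomb (\<lambda>x. if x = b then m else 0) B = lincomb (\<lambda>x. if x = b' then n else 0) B"
    using fb b(1,2) by (simp add: free_basis_def lincomb_single)
  then have "m = (if b = b' then n else 0)"
    using fb b(1) unfolding free_basis_def by fastforce
  with m(1) show ?thesis by (simp split: if_splits)
qed

lemma lincomb_primary_coord:
  assumes "free_basis B" "\<forall>b\<in>B. primary k b" "b0 \<in> B" "b0 j \<noteq> 0"
  shows "lincomb c B j = c b0 * b0 j"
proof -
  have "lincomb c B j = (\<Sum>b\<in>B. if b = b0 then c b0 * b0 j else 0)"
    unfolding lincomb_def using free_primary_basis_unique[OF assms(1,2) _ assms(3) _ assms(4)]
    by (intro sum.cong) auto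
  also have "\<dots> = c b0 * b0 j"
    using assms(1,3) by (simp add: free_basis_def)
  finally show ?thesis .
qed

lemma lincomb_zero_coord: "\<forall>b\<in>B. b j = 0 \<Longrightarrow> lincomb c B j = 0"
  unfolding lincomb_def by (simp add: sum.neutral)

(* In a direction j without basis vector the divisor is 0, which forces sigma j = 0. *)
lemma span_N_primary_iff:
  assumes fb: "free_basis B" and pr: "\<forall>b\<in>B. primary k b"
  shows "\<sigma> \<in> span_N B \<longleftrightarrow> (\<forall>j. lincomb (\<lambda>_. 1) B j dvd \<sigma> j)"
proof
  assume "\<sigma> \<in> span_N B"
  then obtain c where c: "\<sigma> = lincomb c B" unfolding span_N_def by blast
  show "\<forall>j. lincomb (\<lambda>_. 1) B j dvd \<sigma> j"
  proof
    fix j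
    show "lincomb (\<lambda>_. 1) B j dvd \<sigma> j"
    proof (cases "\<exists>b0\<in>B. b0 j \<noteq> 0")
      case True
      then obtain b0 where "b0 \<in> B" "b0 j \<noteq> 0" by blast
      then show ?thesis using c lincomb_primary_coord[OF fb pr] by simp
    next
      case False
      then show ?thesis using c lincomb_zero_coord by simp
    qed
  qed
next
  assume dv: "\<forall>j. lincomb (\<lambda>_. 1) B j dvd \<sigma> j"
  have "\<exists>cb. \<forall>j. b j \<noteq> 0 \<longrightarrow> \<sigma> j = cb * b j" if b: "b \<in> B" for b
  proof -
    obtain n j0 where "n > 0" "b = (\<lambda>i. n * unitvec j0 i)"
      using pr b unfolding primary_def by blast
    then have b0: "b j0 \<noteq> 0" and supp: "\<forall>j. b j \<noteq> 0 \<longrightarrow> j = j0"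
      by (auto simp: unitvec_def)
    have "b j0 dvd \<sigma> j0"
      using dv lincomb_primary_coord[OF fb pr b b0, of "\<lambda>_. 1"] by (metis mult_1)
    then obtain cb where "\<sigma> j0 = cb * b j0" by (metis dvd_def mult.commute)
    with supp show ?thesis by blast
  qed
  then obtain c where c: "\<forall>b\<in>B. \<forall>j. b j \<noteq> 0 \<longrightarrow> \<sigma> j = c b * b j"
    by metis
  have "lincomb c B = \<sigma>"
  proof
    fix j
    show "lincomb c B j = \<sigma> j"
    proof (cases "\<exists>b0\<in>B. b0 j \<noteq> 0")
      case True
      then obtain b0 where "b0 \<in> B" "b0 j \<noteq> 0" by blast
      then show ?thesis using c lincomb_primary_coord[OF fb pr] by simp
    next
      case False
      then show ?thesis using dv[rule_format, of j] lincomb_zero_coord by simp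
    qed
  qed
  then show "\<sigma> \<in> span_N B" unfolding span_N_def by blast
qed

lemma rsem_Atom_primary:
  assumes "free_basis B" "\<forall>b\<in>B. primary k b"
  shows "rsem k (Atom \<gamma> B) = {v. \<forall>j. \<gamma> j \<le> v j \<and> lincomb (\<lambda>_. 1) B j dvd v j - \<gamma> j}"
proof (intro equalityI subsetI)
  fix v assume "v \<in> rsem k (Atom \<gamma> B)"
  then obtain \<sigma> where "v = (\<lambda>i. \<gamma> i + \<sigma> i)" "\<sigma> \<in> span_N B" by auto
  then show "v \<in> {v. \<forall>j. \<gamma> j \<le> v j \<and> lincomb (\<lambda>_. 1) B j dvd v j - \<gamma> j}"
    using span_N_primary_iff[OF assms] by simp
next
  fix v assume "v \<in> {v. \<forall>j. \<gamma> j \<le> v j \<and> lincomb (\<lambda>_. 1) B j dvd v j - \<gamma> j}"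
  then have "(\<lambda>j. v j - \<gamma> j) \<in> span_N B" "v = (\<lambda>i. \<gamma> i + (v i - \<gamma> i))"
    using span_N_primary_iff[OF assms] by auto
  then show "v \<in> rsem k (Atom \<gamma> B)" by auto
qed

lemma tp_saturated_Atom:
  assumes \<gamma>: "\<gamma> \<in> Nk k" and fb: "free_basis B" and pr: "\<forall>b\<in>B. primary k b"
  shows "\<exists>T P. 0 < P \<and> tp_saturated k T P (rsem k (Atom \<gamma> B))"
proof -
  define N where "N = lincomb (\<lambda>_. 1) B"
  define T where "T = Suc (\<Sum>j<k. \<gamma> j)"
  define P where "P = (\<Prod>j<k. max 1 (N j))"
  have "0 < P" unfolding P_def by (intro prod_pos) auto
  have \<gamma>T: "\<gamma> j < T" for j
  proof (cases "j < k")
    case True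
    then have "\<gamma> j \<le> (\<Sum>j<k. \<gamma> j)" by (intro member_le_sum) auto
    then show ?thesis unfolding T_def by simp
  next
    case False
    then show ?thesis using \<gamma> unfolding Nk_def T_def by auto
  qed
  have NP: "N j = 0 \<or> N j dvd P" for j
  proof (cases "j < k")
    case True
    then have "max 1 (N j) dvd P" unfolding P_def by (intro dvd_prodI) auto
    then show ?thesis by (cases "N j = 0") auto
  next
    case False
    then have "\<forall>b\<in>B. b j = 0" using pr primary_support by blast
    then show ?thesis unfolding N_def by (simp add: lincomb_zero_coord)
  qed
  have "tp_saturated k T P {v. \<forall>j. v j \<in> {x. \<gamma> j \<le> x \<and> N j dvd x - \<gamma> j}}"
    using tp_rep_eq_progression[OF \<gamma>T NP] by (intro tp_saturated_coordinatewise) blast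
  then show ?thesis using \<open>0 < P\<close> rsem_Atom_primary[OF fb pr] unfolding N_def by auto
qed

lemma tp_saturated_resimple: "resimple k E \<Longrightarrow> \<exists>T P. 0 < P \<and> tp_saturated k T P (rsem k E)"
proof (induction E)
  case (Atom \<gamma> B)
  then show ?case using tp_saturated_Atom by simp
next
  case (RUn E F)
  then obtain T1 P1 T2 P2 where "0 < P1" "tp_saturated k T1 P1 (rsem k E)"
    "0 < P2" "tp_saturated k T2 P2 (rsem k F)" by auto
  then have "0 < P1 * P2" "tp_saturated k (max T1 T2) (P1 * P2) (rsem k (RUn E F))"
    by (simp_all add: tp_saturated_Un)
  then show ?case by blast
next
  case (RInt E F)
  then obtain T1 P1 T2 P2 where "0 < P1" "tp_saturated k T1 P1 (rsem k E)"
    "0 < P2" "tp_saturated k T2 P2 (rsem k F)" by auto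
  then have "0 < P1 * P2" "tp_saturated k (max T1 T2) (P1 * P2) (rsem k (RInt E F))"
    by (simp_all add: tp_saturated_Int)
  then show ?case by blast
next
  case (RCompl E)
  then show ?case by (auto intro: tp_saturated_Diff)
qed

definition tp_count_step :: "nat \<Rightarrow> nat \<Rightarrow> (nat \<Rightarrow> nat) \<Rightarrow> nat \<Rightarrow> nat \<Rightarrow> nat" where
  "tp_count_step T P s a = s(a := tp_rep T P (Suc (s a)))"

lemma parikh_Nk: "parikh k w \<in> Nk k"
  unfolding parikh_def Nk_def by simp

lemma parikh_snoc: "a < k \<Longrightarrow> parikh k (w @ [a]) = (parikh k w)(a := Suc (parikh k w a))"
  unfolding parikh_def by auto

lemma foldl_tp_count_step:
  "w \<in> lists {..<k} \<Longrightarrow> foldl (tp_count_step T P) (\<lambda>_. 0) w = (\<lambda>i. tp_rep T P (parikh k w i))"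
proof (induction w rule: rev_induct)
  case Nil
  then show ?case by (simp add: parikh_def fun_eq_iff)
next
  case (snoc a w)
  then show ?case
    by (auto simp: parikh_snoc tp_count_step_def tp_rep_Suc fun_eq_iff)
qed

lemma recognizable_if_tp_saturated:
  assumes "S \<subseteq> Nk k" "0 < P" "tp_saturated k T P S"
  shows "recognizable k S"
proof -
  define Q where "Q = {s. \<forall>i. (i \<in> {..<k} \<longrightarrow> s i \<in> {..<T + P}) \<and> (i \<notin> {..<k} \<longrightarrow> s i = 0)}"
  define F where "F = (\<lambda>v i. tp_rep T P (v i)) ` S"
  have "finite Q" unfolding Q_def by (intro finite_set_of_finite_funs) auto
  moreover have "(\<lambda>_. 0) \<in> Q" unfolding Q_def using assms(2) by simp
  moreover have "tp_count_step T P s a \<in> Q" if "s \<in> Q" "a < k" for s a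
    using that tp_rep_less[OF assms(2)] unfolding Q_def tp_count_step_def by auto
  ultimately have "regular k {w \<in> lists {..<k}. foldl (tp_count_step T P) (\<lambda>_. 0) w \<in> F}"
    by (rule regular_dfa_lang)
  moreover have "parikh k w \<in> S \<longleftrightarrow> (\<lambda>i. tp_rep T P (parikh k w i)) \<in> F" for w
    using assms(1,3) parikh_Nk unfolding F_def tp_saturated_def by (auto simp: fun_eq_iff)
  ultimately show ?thesis
    unfolding recognizable_def by (simp add: foldl_tp_count_step cong: conj_cong)
qed

theorem mainTheorem6:
  fixes k :: nat and S :: "(nat \<Rightarrow> nat) set"
  assumes "S \<subseteq> Nk k"
    and "\<exists>E. resimple k E \<and> rsem k E = S"
  shows "recognizable k S"
proof -
  obtain E where "resimple k E" "rsem k E = S" using assms(2) by blast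
  then obtain T P where "0 < P" "tp_saturated k T P S" using tp_saturated_resimple by blast
  with assms(1) show ?thesis by (rule recognizable_if_tp_saturated)
qed

end
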